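(* Let $V=\{1,\dots,n\}$ and let $x=(x_v)_{v\in V}$ be binary variables (all $x_v\in\{0,1\}$, or all $x_v\in\{-1,+1\}$), with configuration space $\mathbb{X}$. Let $\mathcal{G}\subset 2^V$ be a hypergraph whose hyperedges include the singletons $\{v\}$, $v\in V$, and let $$f(x)=\sum_{E\in\mathcal{G}}\theta_E\,\phi_E(x_E),\qquad \phi_E(x_E)=\prod_{v\in E}x_v,$$ with $f^*=\max_{x\in\mathbb{X}}f(x)$. Let an augmented model be given as follows: a finite vertex set $V'$, a hypergraph $\mathcal{G}'\subset 2^{V'}$ (containing the singletons of $V'$), and a surjective map $\Gamma:\mathcal{G}'\to\mathcal{G}$ such that each $E'\in\mathcal{G}'$ is a replica of $E=\Gamma(E')$, i.e. $\Gamma$ restricted to vertices maps $V'$ onto $V$, maps $E'$ bijectively onto $\Gamma(E')$, and maps singletons to singletons. Write $\mathcal{R}(E)=\Gamma^{-1}(E)$, and $A\equiv B$ for $A,B\in\mathcal{G}'$ with $A\neq B$ and $\Gamma(A)=\Gamma(B)$. Let parameters $\theta'_{E'}$, $E'\in\mathcal{G}'$, satisfy $\theta_E=\sum_{E'\in\mathcal{R}(E)}\theta'_{E'}$ for all $E\in\mathcal{G}$, and set $f'(x')=\sum_{E'\in\mathcal{G}'}\theta'_{E'}\phi_{E'}(x'_{E'})$ for $x'\in\mathbb{X}'$ (binary configurations on $V'$). Let $\zeta:\mathbb{X}\to\mathbb{X}'$ be the replication map $\zeta(x)_{v'}=x_{\Gamma(v')}$, so $\zeta(\mathbb{X})$ is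 the set of consistent configurations. Define the Lagrangian $$L(x',\lambda)=f'(x')+\sum_{A\equiv B}\lambda_{A,B}\big(\phi_A(x'_A)-\phi_B(x'_B)\big),$$ the dual function $g(\lambda)=\max_{x'\in\mathbb{X}'}L(x',\lambda)$, and $g^*=\min_\lambda g(\lambda)$. Then $g(\lambda)\ge f^*$ for all $\lambda$, hence $g^*\ge f^*$. If $g(\lambda^* )=g^*$, then exactly one of the following holds: (i) $\arg\max_{x'\in\mathbb{X}'}L(x',\lambda^* )\cap\zeta(\mathbb{X})\neq\emptyset$; then $g^*=f^*$ (strong duality) and the set of all MAP estimates is obtained as $\arg\max_{x'\in\zeta(\mathbb{X})}f'(x')=\arg\max_{x'\in\mathbb{X}'}L(x',\lambda^* )\cap\zeta(\mathbb{X})$; (ii) $\arg\max_{x'\in\mathbb{X}'}L(x',\lambda^* )\cap\zeta(\mathbb{X})=\emptyset$; then there is a duality gap $g^*>f^*$ and for no choice of $\lambda$ does $\arg\max_{x'}L(x',\lambda)$ contain a consistent configuration. Moreover, for any $\lambda^*$, the condition $\arg\max_{x'\in\mathbb{X}'}L(x',\lambda^* )\cap\zeta(\mathbb{X})\neq\emptyset$ holds only if $g(\lambda^* )=g^*$.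
   Context: MAP estimation in a binary graphical model $p(x)\propto\exp f(x)$ amounts to maximizing $f$. Note $f'(\zeta(x))=f(x)$ for all $x\in\mathbb{X}$, so $f^*=\max_{x'\in\zeta(\mathbb{X})}f'(x')$, and this equals maximizing $f'$ subject to $\phi_A(x'_A)=\phi_B(x'_B)$ for all $A\equiv B$; $L$ relaxes these constraints with multipliers $\lambda_{A,B}\in\mathbb{R}$. For consistent $x'\in\zeta(\mathbb{X})$, $\zeta^{-1}(x')$ is the corresponding configuration of $\mathbb{X}$. *)

theory Defs
  imports Complex_Main "HOL-Library.FuncSet"
begin

definition configs :: "'a set \<Rightarrow> real set \<Rightarrow> ('a \<Rightarrow> real) set" where
  "configs V D = (V \<rightarrow>\<^sub>E D)"

definition phi :: "'a set \<Rightarrow> ('a \<Rightarrow> real) \<Rightarrow> real" where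
  "phi E x = (\<Prod>v\<in>E. x v)"

definition pot :: "'a set set \<Rightarrow> ('a set \<Rightarrow> real) \<Rightarrow> ('a \<Rightarrow> real) \<Rightarrow> real" where
  "pot G \<theta> x = (\<Sum>E\<in>G. \<theta> E * phi E x)"

definition argmax_on :: "('c \<Rightarrow> real) \<Rightarrow> 'c set \<Rightarrow> 'c set" where
  "argmax_on h S = {x \<in> S. \<forall>y\<in>S. h y \<le> h x}"

definition replicas :: "'b set set \<Rightarrow> ('b set \<Rightarrow> 'a set) \<Rightarrow> 'a set \<Rightarrow> 'b set set" where
  "replicas G' \<Gamma> E = {E' \<in> G'. \<Gamma> E' = E}"

definition equiv_pairs :: "'b set set \<Rightarrow> ('b set \<Rightarrow> 'a set) \<Rightarrow> ('b set \<times> 'b set) set" where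
  "equiv_pairs G' \<Gamma> = {(A, B). A \<in> G' \<and> B \<in> G' \<and> A \<noteq> B \<and> \<Gamma> A = \<Gamma> B}"

text \<open>Replication map zeta(x)_{v'} = x_{Gamma(v')} (here gamma is the vertex part of Gamma).\<close>
definition replicate_cfg :: "'b set \<Rightarrow> ('b \<Rightarrow> 'a) \<Rightarrow> ('a \<Rightarrow> real) \<Rightarrow> ('b \<Rightarrow> real)" where
  "replicate_cfg V' \<gamma> x = (\<lambda>v'. if v' \<in> V' then x (\<gamma> v') else undefined)"

definition lagrangian ::
  "'b set set \<Rightarrow> ('b set \<Rightarrow> real) \<Rightarrow> ('b set \<Rightarrow> 'a set) \<Rightarrow> ('b \<Rightarrow> real)
    \<Rightarrow> ('b set \<times> 'b set \<Rightarrow> real) \<Rightarrow> real" where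
  "lagrangian G' \<theta>' \<Gamma> x' lam =
     pot G' \<theta>' x' + (\<Sum>(A, B)\<in>equiv_pairs G' \<Gamma>. lam (A, B) * (phi A x' - phi B x'))"

definition dual_fun ::
  "('b \<Rightarrow> real) set \<Rightarrow> 'b set set \<Rightarrow> ('b set \<Rightarrow> real) \<Rightarrow> ('b set \<Rightarrow> 'a set)
    \<Rightarrow> ('b set \<times> 'b set \<Rightarrow> real) \<Rightarrow> real" where
  "dual_fun X' G' \<theta>' \<Gamma> lam = Max ((\<lambda>x'. lagrangian G' \<theta>' \<Gamma> x' lam) ` X')"

end

theory Submission
  imports Defs
begin

text \<open>On a consistent configuration \<open>\<zeta> x\<close> every multiplier term vanishes and \<open>f'(\<zeta> x) = f x\<close>,
  so \<open>L(\<zeta> x, \<lambda>) = f x\<close> for all \<open>\<lambda>\<close>. Hence \<open>g(\<lambda>) \<ge> f x\<close> (weak duality), and \<open>\<zeta> x\<close> maximizes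
  \<open>L(\<cdot>, \<lambda>)\<close> exactly when \<open>f x = g(\<lambda>)\<close>. A consistent maximizer therefore forces
  \<open>g(\<lambda>) = f\<^sup>* \<le> g\<^sup>* \<le> g(\<lambda>)\<close>; conversely, if \<open>g(\<lambda>\<^sup>*) = g\<^sup>* = f\<^sup>*\<close> then the replica of any MAP
  estimate is a consistent maximizer. Beyond finiteness, nothing but the exactness
  \<open>L(\<zeta> x, \<lambda>) = f x\<close> is needed.\<close>

lemma argmax_on_finite:
  assumes "finite S"
  shows "argmax_on h S = {x \<in> S. h x = Max (h ` S)}"
  using assms by (auto simp: argmax_on_def intro!: antisym Max_ge Max.boundedI)

lemma argmax_on_image:
  assumes "\<And>x. x \<in> S \<Longrightarrow> h (\<zeta> x) = f x"
  shows "\<zeta> ` argmax_on f S = argmax_on h (\<zeta> ` S)"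
  using assms unfolding argmax_on_def by auto

locale exact_relaxation =
  fixes X :: "'x set" and X' :: "'y set" and \<zeta> :: "'x \<Rightarrow> 'y"
    and f :: "'x \<Rightarrow> real" and L :: "'y \<Rightarrow> 'l \<Rightarrow> real"
  assumes finite_X: "finite X" and X_nonempty: "X \<noteq> {}" and finite_X': "finite X'"
    and \<zeta>_into: "\<zeta> ` X \<subseteq> X'"
    and L_\<zeta>: "x \<in> X \<Longrightarrow> L (\<zeta> x) lam = f x"
begin

abbreviation fmax :: real where "fmax \<equiv> Max (f ` X)"
abbreviation dual :: "'l \<Rightarrow> real" where "dual lam \<equiv> Max ((\<lambda>y. L y lam) ` X')"
abbreviation dual_min :: real where "dual_min \<equiv> (INF lam. dual lam)"
abbreviation maximizers :: "'l \<Rightarrow> 'y set" where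
  "maximizers lam \<equiv> argmax_on (\<lambda>y. L y lam) X'"

lemma f_le_dual: "x \<in> X \<Longrightarrow> f x \<le> dual lam"
  using finite_X' \<zeta>_into L_\<zeta>[of x lam] by (metis Max_ge finite_imageI image_eqI image_subset_iff)

lemma weak_duality: "fmax \<le> dual lam"
  using finite_X X_nonempty f_le_dual by simp

lemma fmax_le_dual_min: "fmax \<le> dual_min"
  using weak_duality by (simp add: cINF_greatest)

lemma dual_min_le: "dual_min \<le> dual lam"
  using weak_duality by (intro cINF_lower bdd_belowI2) auto

lemma maximizers_inter_consistent:
  "maximizers lam \<inter> \<zeta> ` X = \<zeta> ` {x \<in> X. f x = dual lam}"
  using finite_X' \<zeta>_into L_\<zeta> by (auto simp: argmax_on_finite)

lemma consistent_maximizer_imp_strong_duality: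
  assumes "maximizers lam \<inter> \<zeta> ` X \<noteq> {}"
  shows "dual lam = fmax" and "dual_min = fmax"
proof -
  obtain x where "x \<in> X" "f x = dual lam"
    using assms by (auto simp: maximizers_inter_consistent)
  then have "dual lam \<le> fmax" using finite_X by (metis Max_ge finite_imageI image_eqI)
  then show "dual lam = fmax" using weak_duality by (rule antisym)
  then show "dual_min = fmax" using dual_min_le fmax_le_dual_min by (metis antisym)
qed

lemma dual_optimum_dichotomy:
  assumes optimal: "dual lams = dual_min"
  shows "(maximizers lams \<inter> \<zeta> ` X \<noteq> {} \<and> dual_min = fmax)
    \<or> (maximizers lams \<inter> \<zeta> ` X = {} \<and> fmax < dual_min
       \<and> (\<forall>lam. maximizers lam \<inter> \<zeta> ` X = {}))"
proof (cases "maximizers lams \<inter> \<zeta> ` X = {}")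
  case False
  then show ?thesis using consistent_maximizer_imp_strong_duality(2)[OF False] by simp
next
  case no_consistent: True
  have gap: "dual_min \<noteq> fmax"
  proof
    assume "dual_min = fmax"
    have "fmax \<in> f ` X" using finite_X X_nonempty by simp
    then obtain x where "x \<in> X" "f x = fmax" by (metis imageE)
    with \<open>dual_min = fmax\<close> optimal have "\<zeta> x \<in> maximizers lams \<inter> \<zeta> ` X"
      unfolding maximizers_inter_consistent by simp
    with no_consistent show False by simp
  qed
  then have "\<forall>lam. maximizers lam \<inter> \<zeta> ` X = {}"
    using consistent_maximizer_imp_strong_duality(2) by metis
  with no_consistent gap fmax_le_dual_min show ?thesis by simp
qed

end

lemma finite_configs: "finite V \<Longrightarrow> finite D \<Longrightarrow> finite (configs V D)"
  by (simp add: configs_def finite_PiE)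

lemma configs_nonempty: "D \<noteq> {} \<Longrightarrow> configs V D \<noteq> {}"
  by (simp add: configs_def PiE_eq_empty_iff)

lemma replicate_cfg_in_configs:
  "\<gamma> ` V' \<subseteq> V \<Longrightarrow> x \<in> configs V D \<Longrightarrow> replicate_cfg V' \<gamma> x \<in> configs V' D"
  by (auto simp: configs_def replicate_cfg_def PiE_iff extensional_def)

lemma phi_replicate_cfg:
  assumes "A \<subseteq> V'" and "bij_betw \<gamma> A E"
  shows "phi A (replicate_cfg V' \<gamma> x) = phi E x"
proof -
  have "phi A (replicate_cfg V' \<gamma> x) = (\<Prod>v\<in>A. x (\<gamma> v))"
    unfolding phi_def replicate_cfg_def using assms(1) by (intro prod.cong) auto
  also have "\<dots> = phi E x"
    unfolding phi_def using prod.reindex_bij_betw[OF assms(2)] by simp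
  finally show ?thesis .
qed

locale replica_hypergraph =
  fixes V' :: "'b set" and G' :: "'b set set" and \<Gamma> :: "'b set \<Rightarrow> 'a set" and \<gamma> :: "'b \<Rightarrow> 'a"
  assumes finite_G': "finite G'"
    and G'_sub: "G' \<subseteq> Pow V'"
    and replica: "E' \<in> G' \<Longrightarrow> bij_betw \<gamma> E' (\<Gamma> E')"
begin

lemma phi_replicate: "E' \<in> G' \<Longrightarrow> phi E' (replicate_cfg V' \<gamma> x) = phi (\<Gamma> E') x"
  using G'_sub replica by (blast intro: phi_replicate_cfg)

lemma pot_replicate:
  assumes \<theta>_split: "\<And>E. E \<in> \<Gamma> ` G' \<Longrightarrow> \<theta> E = (\<Sum>E'\<in>replicas G' \<Gamma> E. \<theta>' E')"
  shows "pot G' \<theta>' (replicate_cfg V' \<gamma> x) = pot (\<Gamma> ` G') \<theta> x"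
proof -
  have "pot G' \<theta>' (replicate_cfg V' \<gamma> x) = (\<Sum>E'\<in>G'. \<theta>' E' * phi (\<Gamma> E') x)"
    unfolding pot_def by (intro sum.cong) (auto simp: phi_replicate)
  also have "\<dots> = (\<Sum>E\<in>\<Gamma> ` G'. \<Sum>E'\<in>replicas G' \<Gamma> E. \<theta>' E' * phi (\<Gamma> E') x)"
    unfolding replicas_def using finite_G' by (intro sum.group[symmetric]) auto
  also have "\<dots> = (\<Sum>E\<in>\<Gamma> ` G'. (\<Sum>E'\<in>replicas G' \<Gamma> E. \<theta>' E') * phi E x)"
    unfolding sum_distrib_right by (intro sum.cong refl) (simp add: replicas_def)
  also have "\<dots> = pot (\<Gamma> ` G') \<theta> x"
    unfolding pot_def by (intro sum.cong refl) (simp add: \<theta>_split)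
  finally show ?thesis .
qed

lemma lagrangian_replicate:
  "lagrangian G' \<theta>' \<Gamma> (replicate_cfg V' \<gamma> x) lam = pot G' \<theta>' (replicate_cfg V' \<gamma> x)"
proof -
  have "(\<Sum>(A, B)\<in>equiv_pairs G' \<Gamma>.
          lam (A, B) * (phi A (replicate_cfg V' \<gamma> x) - phi B (replicate_cfg V' \<gamma> x))) = 0"
    by (intro sum.neutral) (auto simp: equiv_pairs_def phi_replicate)
  then show ?thesis unfolding lagrangian_def by simp
qed

end

theorem proposition1:
  fixes n :: nat
    and D :: "real set"
    and G :: "nat set set"
    and \<theta> :: "nat set \<Rightarrow> real"
    and V' :: "'b set"
    and G' :: "'b set set"
    and \<theta>' :: "'b set \<Rightarrow> real"
    and \<Gamma> :: "'b set \<Rightarrow> nat set"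
    and \<gamma> :: "'b \<Rightarrow> nat"
  defines "V \<equiv> {1..n}"
  assumes D: "D = {0, 1} \<or> D = {-1, 1}"
    and G_sub: "G \<subseteq> Pow V"
    and G_sing: "\<forall>v\<in>V. {v} \<in> G"
    and V'_fin: "finite V'"
    and G'_sub: "G' \<subseteq> Pow V'"
    and G'_sing: "\<forall>v'\<in>V'. {v'} \<in> G'"
    and \<Gamma>_surj: "\<Gamma> ` G' = G"
    and \<gamma>_onto: "\<gamma> ` V' = V"
    and \<Gamma>_sing: "\<forall>v'\<in>V'. \<Gamma> {v'} = {\<gamma> v'}"
    and \<Gamma>_replica: "\<forall>E'\<in>G'. bij_betw \<gamma> E' (\<Gamma> E')"
    and \<theta>_split: "\<forall>E\<in>G. \<theta> E = (\<Sum>E'\<in>replicas G' \<Gamma> E. \<theta>' E')"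
  shows
    "let X = configs V D; X' = configs V' D;
         f = pot G \<theta>; f' = pot G' \<theta>';
         fstar = Max (f ` X);
         \<zeta> = replicate_cfg V' \<gamma>;
         L = lagrangian G' \<theta>' \<Gamma>;
         g = dual_fun X' G' \<theta>' \<Gamma>;
         gstar = (INF lam. g lam);
         AL = (\<lambda>lam. argmax_on (\<lambda>x'. L x' lam) X')
     in (\<forall>lam. g lam \<ge> fstar) \<and> gstar \<ge> fstar \<and>
        (\<forall>lams. g lams = gstar \<longrightarrow>
           ((AL lams \<inter> \<zeta> ` X \<noteq> {} \<and> gstar = fstar \<and>
             \<zeta> ` argmax_on f X = argmax_on f' (\<zeta> ` X) \<and>
             argmax_on f' (\<zeta> ` X) = AL lams \<inter> \<zeta> ` X)
           \<or>
            (AL lams \<inter> \<zeta> ` X = {} \<and> gstar > fstar \<and>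
             (\<forall>lam. AL lam \<inter> \<zeta> ` X = {})))) \<and>
        (\<forall>lams. AL lams \<inter> \<zeta> ` X \<noteq> {} \<longrightarrow> g lams = gstar)"
proof -
  have finite_D: "finite D" "D \<noteq> {}" using D by auto
  interpret replica_hypergraph V' G' \<Gamma> \<gamma>
    using G'_sub V'_fin \<Gamma>_replica by unfold_locales (auto intro: finite_subset)
  let ?\<zeta> = "replicate_cfg V' \<gamma>"
  have pot_\<zeta>: "pot G' \<theta>' (?\<zeta> x) = pot G \<theta> x" for x
    using pot_replicate[of \<theta> \<theta>'] \<theta>_split \<Gamma>_surj by simp
  interpret exact_relaxation "configs V D" "configs V' D" ?\<zeta> "pot G \<theta>" "lagrangian G' \<theta>' \<Gamma>"
  proof unfold_locales
    show "finite (configs V D)" using finite_D by (simp add: V_def finite_configs)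
    show "configs V D \<noteq> {}" using finite_D(2) by (rule configs_nonempty)
    show "finite (configs V' D)" using V'_fin finite_D(1) by (rule finite_configs)
    show "?\<zeta> ` configs V D \<subseteq> configs V' D" using \<gamma>_onto replicate_cfg_in_configs by blast
    show "lagrangian G' \<theta>' \<Gamma> (?\<zeta> x) lam = pot G \<theta> x" for x lam
      by (simp add: lagrangian_replicate pot_\<zeta>)
  qed
  have replicated_MAP: "?\<zeta> ` argmax_on (pot G \<theta>) (configs V D)
      = argmax_on (pot G' \<theta>') (?\<zeta> ` configs V D)"
    by (rule argmax_on_image) (rule pot_\<zeta>)
  have MAP_via_dual: "argmax_on (pot G' \<theta>') (?\<zeta> ` configs V D)
      = maximizers lam \<inter> ?\<zeta> ` configs V D" if "dual lam = fmax" for lam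
    using that replicated_MAP finite_X by (simp add: argmax_on_finite maximizers_inter_consistent)
  show ?thesis
    unfolding Let_def dual_fun_def
  proof (intro conjI allI impI)
    fix lams assume optimal: "dual lams = dual_min"
    show "(maximizers lams \<inter> ?\<zeta> ` configs V D \<noteq> {} \<and> dual_min = fmax \<and>
        ?\<zeta> ` argmax_on (pot G \<theta>) (configs V D) = argmax_on (pot G' \<theta>') (?\<zeta> ` configs V D) \<and>
        argmax_on (pot G' \<theta>') (?\<zeta> ` configs V D) = maximizers lams \<inter> ?\<zeta> ` configs V D)
      \<or> (maximizers lams \<inter> ?\<zeta> ` configs V D = {} \<and> fmax < dual_min \<and>
        (\<forall>lam. maximizers lam \<inter> ?\<zeta> ` configs V D = {}))"
      using dual_optimum_dichotomy[OF optimal] optimal replicated_MAP MAP_via_dual[of lams]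
      by auto
  qed (use weak_duality fmax_le_dual_min consistent_maximizer_imp_strong_duality in auto)
qed

end
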